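(* Let $A=D+N\in\mathcal{M}_n(\mathbb{H})$, where $D=\operatorname{diag}(d_1,\dots,d_n)$ with all $d_i\in\mathbb{R}$ and $N=[a_{ij}]$ is a strictly upper triangular (hence nilpotent) matrix whose graph $\mathcal{G}_N$ is a tree. Let $\underline{d}=\min_i d_i$, $\overline{d}=\max_i d_i$ and, for $d\in[\underline{d},\overline{d}]$, $$r(d)=\max\Big\{\sum_{i\ne j}\beta_i\beta_j|a_{ij}|:\ \sum_i d_i\beta_i^2=d,\ \beta\in\mathbb{S}^+_{\mathbb{R}^n}\Big\}.$$ Then $$W(A)=\bigcup_{d\in[\underline{d},\overline{d}]}\mathbb{D}_{\mathbb{H}}(d,r(d)).$$
   Context: $\mathbb{H}$ denotes the real quaternions, $|q|^2=qq^*$. The numerical range of $A\in\mathcal{M}_n(\mathbb{H})$ is $W(A)=\{\mathbf{x}^*A\mathbf{x}:\mathbf{x}\in\mathbb{H}^n,\ \mathbf{x}^*\mathbf{x}=1\}$. $\mathbb{D}_{\mathbb{H}}(c,r)=\{q\in\mathbb{H}:|q-c|\le r\}$. $\mathbb{S}^+_{\mathbb{R}^n}=\{\beta\in\mathbb{R}^n:\|\beta\|=1,\ \beta_i\ge0\ \forall i\}$. The graph $\mathcal{G}_N$ of $N=[a_{ij}]$ is the undirected graph on $\{1,\dots,n\}$ with an edge between $i$ and $j$ (a loop if $i=j$) whenever $a_{ij}\ne0$ or $a_{ji}\ne0$; $N$ is a tree if $\mathcal{G}_N$ is connected and has no cycles. *)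

theory Defs
  imports "HOL-Analysis.Analysis"
begin

datatype quat = Quat (qRe: real) (qI: real) (qJ: real) (qK: real)

instantiation quat :: "{ab_group_add, one, times}"
begin
definition "0 = Quat 0 0 0 0"
definition "1 = Quat 1 0 0 0"
definition "p + q = Quat (qRe p + qRe q) (qI p + qI q) (qJ p + qJ q) (qK p + qK q)"
definition "- q = Quat (- qRe q) (- qI q) (- qJ q) (- qK q)"
definition "p - q = Quat (qRe p - qRe q) (qI p - qI q) (qJ p - qJ q) (qK p - qK q)"
text \<open>Hamilton product: i^2 = j^2 = k^2 = ijk = -1.\<close>
definition "p * q = Quat
   (qRe p * qRe q - qI p * qI q - qJ p * qJ q - qK p * qK q)
   (qRe p * qI q + qI p * qRe q + qJ p * qK q - qK p * qJ q)
   (qRe p * qJ q - qI p * qK q + qJ p * qRe q + qK p * qI q)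
   (qRe p * qK q + qI p * qJ q - qJ p * qI q + qK p * qRe q)"
instance
  by standard (auto simp: zero_quat_def plus_quat_def uminus_quat_def minus_quat_def
      intro: quat.expand)
end

definition qcnj :: "quat \<Rightarrow> quat" where
  "qcnj q = Quat (qRe q) (- qI q) (- qJ q) (- qK q)"

definition qreal :: "real \<Rightarrow> quat" where
  "qreal r = Quat r 0 0 0"

definition qnorm :: "quat \<Rightarrow> real" where
  "qnorm q = sqrt ((qRe q)\<^sup>2 + (qI q)\<^sup>2 + (qJ q)\<^sup>2 + (qK q)\<^sup>2)"

definition qdisk :: "quat \<Rightarrow> real \<Rightarrow> quat set" where
  "qdisk c r = {q. qnorm (q - c) \<le> r}"

definition num_range :: "nat \<Rightarrow> (nat \<Rightarrow> nat \<Rightarrow> quat) \<Rightarrow> quat set" where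
  "num_range n A = {(\<Sum>i<n. \<Sum>j<n. qcnj (x i) * A i j * x j) | x.
      (\<Sum>i<n. qcnj (x i) * x i) = 1}"

definition mat_adj :: "(nat \<Rightarrow> nat \<Rightarrow> quat) \<Rightarrow> nat \<Rightarrow> nat \<Rightarrow> bool" where
  "mat_adj N i j \<longleftrightarrow> N i j \<noteq> 0 \<or> N j i \<noteq> 0"

definition graph_connected :: "nat \<Rightarrow> (nat \<Rightarrow> nat \<Rightarrow> bool) \<Rightarrow> bool" where
  "graph_connected n E \<longleftrightarrow>
     (\<forall>i<n. \<forall>j<n. (\<lambda>u v. u < n \<and> v < n \<and> E u v)\<^sup>*\<^sup>* i j)"

definition graph_has_cycle :: "nat \<Rightarrow> (nat \<Rightarrow> nat \<Rightarrow> bool) \<Rightarrow> bool" where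
  "graph_has_cycle n E \<longleftrightarrow>
     (\<exists>i<n. E i i) \<or>
     (\<exists>vs. length vs \<ge> 3 \<and> distinct vs \<and> set vs \<subseteq> {..<n} \<and>
        (\<forall>k < length vs - 1. E (vs ! k) (vs ! Suc k)) \<and> E (last vs) (hd vs))"

definition mat_is_tree :: "nat \<Rightarrow> (nat \<Rightarrow> nat \<Rightarrow> quat) \<Rightarrow> bool" where
  "mat_is_tree n N \<longleftrightarrow> graph_connected n (mat_adj N) \<and> \<not> graph_has_cycle n (mat_adj N)"

definition rfun :: "nat \<Rightarrow> (nat \<Rightarrow> real) \<Rightarrow> (nat \<Rightarrow> nat \<Rightarrow> quat) \<Rightarrow> real \<Rightarrow> real" where
  "rfun n dg N d = Sup {(\<Sum>i<n. \<Sum>j\<in>{..<n}-{i}. \<beta> i * \<beta> j * qnorm (N i j)) | \<beta>.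
      (\<Sum>i<n. (\<beta> i)\<^sup>2) = 1 \<and> (\<forall>i<n. \<beta> i \<ge> 0) \<and> (\<Sum>i<n. dg i * (\<beta> i)\<^sup>2) = d}"

end

theory Submission
  imports Defs
begin

text \<open>For a unit vector x put \<beta>_i = |x_i|. Then x^*Ax = \<Sum> d_i \<beta>_i^2 + x^*Nx, and the triangle
  inequality bounds |x^*Nx| by \<rho>(\<beta>) = \<Sum>_{i \<noteq> j} \<beta>_i \<beta>_j |a_ij|, which gives one inclusion.
  Conversely, on a tree one can choose unit quaternions u_i leaf by leaf with
  u_i^* a_ij u_j = |a_ij| \<omega> for a prescribed unit \<omega>; then x_i = \<beta>_i u_i realises
  \<Sum> d_i \<beta>_i^2 + \<rho>(\<beta>) \<omega>, so every point at distance \<rho>(\<beta>) from the diagonal value lies in W(A).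
  A point p of the disk of radius r(d) lies on such a sphere: slide a maximiser of r(d) towards a
  unit vector, where \<rho> vanishes, and apply the intermediate value theorem.\<close>

lemma quat_eq_iff: "p = q \<longleftrightarrow> qRe p = qRe q \<and> qI p = qI q \<and> qJ p = qJ q \<and> qK p = qK q"
  by (cases p; cases q) auto

lemma quat_components [simp]:
  "qRe 0 = 0" "qI 0 = 0" "qJ 0 = 0" "qK 0 = 0"
  "qRe 1 = 1" "qI 1 = 0" "qJ 1 = 0" "qK 1 = 0"
  "qRe (p + q) = qRe p + qRe q" "qI (p + q) = qI p + qI q"
  "qJ (p + q) = qJ p + qJ q" "qK (p + q) = qK p + qK q"
  "qRe (p - q) = qRe p - qRe q" "qI (p - q) = qI p - qI q"
  "qJ (p - q) = qJ p - qJ q" "qK (p - q) = qK p - qK q"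
  "qRe (- q) = - qRe q" "qI (- q) = - qI q" "qJ (- q) = - qJ q" "qK (- q) = - qK q"
  "qRe (p * q) = qRe p * qRe q - qI p * qI q - qJ p * qJ q - qK p * qK q"
  "qI (p * q) = qRe p * qI q + qI p * qRe q + qJ p * qK q - qK p * qJ q"
  "qJ (p * q) = qRe p * qJ q - qI p * qK q + qJ p * qRe q + qK p * qI q"
  "qK (p * q) = qRe p * qK q + qI p * qJ q - qJ p * qI q + qK p * qRe q"
  "qRe (qcnj q) = qRe q" "qI (qcnj q) = - qI q" "qJ (qcnj q) = - qJ q" "qK (qcnj q) = - qK q"
  "qRe (qreal r) = r" "qI (qreal r) = 0" "qJ (qreal r) = 0" "qK (qreal r) = 0"
  by (simp_all add: zero_quat_def one_quat_def plus_quat_def minus_quat_def uminus_quat_def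
      times_quat_def qcnj_def qreal_def)

instance quat :: ring_1
  by standard (simp_all add: quat_eq_iff algebra_simps)

lemma qnorm_nonneg: "qnorm q \<ge> 0"
  by (simp add: qnorm_def)

lemma qnorm_power2: "(qnorm q)\<^sup>2 = (qRe q)\<^sup>2 + (qI q)\<^sup>2 + (qJ q)\<^sup>2 + (qK q)\<^sup>2"
  by (simp add: qnorm_def)

lemma qnorm_zero [simp]: "qnorm 0 = 0"
  by (simp add: qnorm_def)

lemma qnorm_eq_0_iff: "qnorm q = 0 \<longleftrightarrow> q = 0"
  by (simp add: qnorm_def quat_eq_iff add_nonneg_eq_0_iff)

lemma qnorm_mult: "qnorm (p * q) = qnorm p * qnorm q"
  by (simp add: qnorm_def real_sqrt_mult[symmetric] power2_eq_square algebra_simps)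

lemma qnorm_cnj: "qnorm (qcnj q) = qnorm q"
  by (simp add: qnorm_def)

lemma qnorm_qreal: "qnorm (qreal r) = \<bar>r\<bar>"
  by (simp add: qnorm_def)

lemma qnorm_triangle: "qnorm (p + q) \<le> qnorm p + qnorm q"
proof -
  have "qnorm q = norm ((qRe q, qI q), (qJ q, qK q))" for q
    by (simp add: qnorm_def norm_Pair add.assoc)
  then show ?thesis
    using norm_triangle_ineq[of "((qRe p, qI p), (qJ p, qK p))" "((qRe q, qI q), (qJ q, qK q))"]
    by simp
qed

lemma qnorm_sum: "qnorm (\<Sum>i\<in>A. f i) \<le> (\<Sum>i\<in>A. qnorm (f i))"
proof (induction A rule: infinite_finite_induct)
  case (insert x F)
  then show ?case using qnorm_triangle[of "f x" "sum f F"] by simp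
qed simp_all

lemma qcnj_mult: "qcnj (p * q) = qcnj q * qcnj p"
  by (simp add: quat_eq_iff)

lemma qcnj_qcnj [simp]: "qcnj (qcnj q) = q"
  by (simp add: quat_eq_iff)

lemma qcnj_qreal [simp]: "qcnj (qreal r) = qreal r"
  by (simp add: quat_eq_iff)

lemma qreal_mult: "qreal a * qreal b = qreal (a * b)"
  by (simp add: quat_eq_iff)

lemma qreal_commute: "qreal r * q = q * qreal r"
  by (simp add: quat_eq_iff)

lemma qreal_0 [simp]: "qreal 0 = 0"
  by (simp add: quat_eq_iff)

lemma qreal_1 [simp]: "qreal 1 = 1"
  by (simp add: quat_eq_iff)

lemma qreal_sum: "qreal (\<Sum>i\<in>A. f i) = (\<Sum>i\<in>A. qreal (f i))"
proof (induction A rule: infinite_finite_induct)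
  case (insert x F)
  then show ?case by (simp add: quat_eq_iff)
qed (simp_all add: quat_eq_iff)

lemma qcnj_mult_self: "qcnj q * q = qreal ((qnorm q)\<^sup>2)"
  unfolding quat_eq_iff qnorm_power2 by (simp add: power2_eq_square)

lemma mult_qcnj_self: "q * qcnj q = qreal ((qnorm q)\<^sup>2)"
  unfolding quat_eq_iff qnorm_power2 by (simp add: power2_eq_square)

lemma unit_quat_inverse:
  assumes "qnorm a = 1"
  shows "qcnj a * a = 1" "a * qcnj a = 1"
  using assms by (simp_all add: qcnj_mult_self mult_qcnj_self)

lemma quat_polar: "\<exists>\<omega>. qnorm \<omega> = 1 \<and> q = qreal (qnorm q) * \<omega>"
proof (cases "q = 0")
  case True
  then show ?thesis by (intro exI[of _ 1]) (simp add: qnorm_def quat_eq_iff)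
next
  case False
  then have pos: "qnorm q > 0"
    using qnorm_nonneg[of q] qnorm_eq_0_iff[of q] by linarith
  show ?thesis
  proof (intro exI conjI)
    show "qnorm (qreal (1 / qnorm q) * q) = 1"
      using pos by (simp add: qnorm_mult qnorm_qreal)
    have "qreal (qnorm q) * (qreal (1 / qnorm q) * q) = qreal (qnorm q * (1 / qnorm q)) * q"
      by (simp add: mult.assoc[symmetric] qreal_mult)
    then show "q = qreal (qnorm q) * (qreal (1 / qnorm q) * q)"
      using pos by simp
  qed
qed

lemma exists_unit_right_phase:
  assumes a: "qnorm a = 1" and \<omega>: "qnorm \<omega> = 1"
  shows "\<exists>b. qnorm b = 1 \<and> qcnj a * q * b = qreal (qnorm q) * \<omega>"
proof -
  obtain v where v: "qnorm v = 1" "q = qreal (qnorm q) * v"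
    using quat_polar by blast
  have "qcnj a * (qreal (qnorm q) * v) * (qcnj v * a * \<omega>)
      = qreal (qnorm q) * (qcnj a * (v * qcnj v) * a * \<omega>)"
    by (simp add: mult.assoc qreal_commute)
  also have "\<dots> = qreal (qnorm q) * \<omega>"
    using unit_quat_inverse[OF v(1)] unit_quat_inverse[OF a] by (simp add: mult.assoc)
  finally show ?thesis
    using v a \<omega> by (intro exI[of _ "qcnj v * a * \<omega>"]) (simp add: qnorm_mult qnorm_cnj)
qed

lemma exists_unit_left_phase:
  assumes a: "qnorm a = 1" and \<omega>: "qnorm \<omega> = 1"
  shows "\<exists>b. qnorm b = 1 \<and> qcnj b * q * a = qreal (qnorm q) * \<omega>"
proof -
  obtain b where b: "qnorm b = 1" "qcnj a * qcnj q * b = qreal (qnorm (qcnj q)) * qcnj \<omega>"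
    using exists_unit_right_phase[OF a] \<omega> by (metis qnorm_cnj)
  have "qcnj b * q * a = qcnj (qcnj a * qcnj q * b)"
    by (simp add: qcnj_mult mult.assoc)
  also have "\<dots> = qreal (qnorm q) * \<omega>"
    using b(2) by (simp add: qnorm_cnj qcnj_mult qreal_commute)
  finally show ?thesis using b(1) by blast
qed

definition acyclic_graph_on :: "'a set \<Rightarrow> ('a \<Rightarrow> 'a \<Rightarrow> bool) \<Rightarrow> bool" where
  "acyclic_graph_on V E \<longleftrightarrow> (\<forall>v\<in>V. \<not> E v v) \<and>
     \<not> (\<exists>vs. 3 \<le> length vs \<and> distinct vs \<and> set vs \<subseteq> V \<and> successively E vs \<and> E (last vs) (hd vs))"

lemma mat_is_tree_acyclic: "mat_is_tree n N \<Longrightarrow> acyclic_graph_on {..<n} (mat_adj N)"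
  unfolding mat_is_tree_def graph_has_cycle_def acyclic_graph_on_def successively_conv_nth
  by (simp add: less_diff_conv)

lemma acyclic_graph_on_subset: "acyclic_graph_on V E \<Longrightarrow> W \<subseteq> V \<Longrightarrow> acyclic_graph_on W E"
  unfolding acyclic_graph_on_def by blast

lemma acyclic_path_last_neighbour:
  assumes ac: "acyclic_graph_on V E" and vs: "distinct vs" "set vs \<subseteq> V" "successively E vs"
    and a: "E (last vs) a" "a \<in> set vs"
  shows "a = vs ! (length vs - 2)"
proof -
  obtain k where k: "k < length vs" "vs ! k = a"
    using a(2) by (auto simp: in_set_conv_nth)
  have "k \<noteq> length vs - 1"
  proof
    assume "k = length vs - 1"
    then have "a = last vs"
      using k last_conv_nth[of vs] by force
    then show False
      using ac a vs(2) unfolding acyclic_graph_on_def by auto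
  qed
  moreover have "\<not> k < length vs - 2"
  proof
    assume short: "k < length vs - 2"
    define ws where "ws = drop k vs"
    have "successively E ws"
      using vs(3) successively_append_iff[of E "take k vs" ws] by (simp add: ws_def)
    moreover have "last ws = last vs" "hd ws = a"
      using short k by (simp_all add: ws_def hd_drop_conv_nth)
    moreover have "3 \<le> length ws" "distinct ws" "set ws \<subseteq> V"
      using short vs by (auto simp: ws_def dest: in_set_dropD)
    moreover have "E (last ws) (hd ws)"
      using a(1) calculation(2,3) by simp
    ultimately show False
      using ac unfolding acyclic_graph_on_def by blast
  qed
  ultimately have "k = length vs - 2"
    using k(1) by linarith
  then show ?thesis
    using k(2) by simp
qed

lemma acyclic_graph_has_leaf:
  assumes fin: "finite V" and ne: "V \<noteq> {}" and ac: "acyclic_graph_on V E"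
  shows "\<exists>l\<in>V. \<forall>a\<in>V. \<forall>b\<in>V. E l a \<longrightarrow> E l b \<longrightarrow> a = b"
proof -
  define path where "path vs \<longleftrightarrow> vs \<noteq> [] \<and> distinct vs \<and> set vs \<subseteq> V \<and> successively E vs"
    for vs
  obtain v where "v \<in> V" using ne by blast
  then have "path [v]" by (simp add: path_def)
  moreover have "length vs < Suc (card V)" if "path vs" for vs
    using that card_mono[OF fin, of "set vs"] by (simp add: path_def distinct_card[symmetric])
  ultimately obtain vs where vs: "path vs" and longest: "\<And>ws. path ws \<Longrightarrow> length ws \<le> length vs"
    using ex_has_greatest_nat[of path "[v]" length "Suc (card V)"] by blast
  have on_path: "a \<in> set vs" if "a \<in> V" "E (last vs) a" for a
  proof (rule ccontr)
    assume "a \<notin> set vs"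
    moreover have "successively E (vs @ [a])"
      using vs that(2) by (simp add: path_def successively_append_iff)
    ultimately have "path (vs @ [a])"
      using vs that(1) by (simp add: path_def)
    then show False using longest[of "vs @ [a]"] by simp
  qed
  have predecessor: "a = vs ! (length vs - 2)" if "a \<in> V" "E (last vs) a" for a
    using acyclic_path_last_neighbour[OF ac _ _ _ that(2) on_path[OF that]] vs
    by (simp add: path_def)
  show ?thesis
  proof (intro bexI[of _ "last vs"] ballI impI)
    fix a b assume "a \<in> V" "b \<in> V" "E (last vs) a" "E (last vs) b"
    then show "a = b" using predecessor by metis
  qed (use vs in \<open>auto simp: path_def\<close>)
qed

lemma acyclic_graph_labelling:
  assumes "finite V" "acyclic_graph_on V E"
    and sym: "\<And>i j. E i j \<Longrightarrow> E j i"
    and start: "P c"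
    and extend: "\<And>i j a. i \<in> V \<Longrightarrow> j \<in> V \<Longrightarrow> E i j \<Longrightarrow> P a \<Longrightarrow> \<exists>b. P b \<and> C i j a b"
    and C_sym: "\<And>i j a b. C i j a b \<Longrightarrow> C j i b a"
  shows "\<exists>u. (\<forall>i\<in>V. P (u i)) \<and> (\<forall>i\<in>V. \<forall>j\<in>V. E i j \<longrightarrow> C i j (u i) (u j))"
  using assms(1,2) extend
proof (induction "card V" arbitrary: V rule: less_induct)
  case less
  show ?case
  proof (cases "V = {}")
    case False
    obtain l where l: "l \<in> V" and leaf: "\<forall>a\<in>V. \<forall>b\<in>V. E l a \<longrightarrow> E l b \<longrightarrow> a = b"
      using acyclic_graph_has_leaf[OF less.prems(1) False less.prems(2)] by blast
    have no_loop: "\<not> E l l"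
      using less.prems(2) l by (simp add: acyclic_graph_on_def)
    define V' where "V' = V - {l}"
    have "card V' < card V"
      unfolding V'_def using less.prems(1) l by (rule card_Diff1_less)
    moreover have "finite V'" "acyclic_graph_on V' E"
      using less.prems(1) acyclic_graph_on_subset[OF less.prems(2)] by (auto simp: V'_def)
    ultimately
    obtain u where u: "\<forall>i\<in>V'. P (u i)" "\<forall>i\<in>V'. \<forall>j\<in>V'. E i j \<longrightarrow> C i j (u i) (u j)"
      using less.hyps less.prems(3) unfolding V'_def by (metis DiffD1)
    obtain b where b: "P b" "\<forall>m\<in>V'. E l m \<longrightarrow> C m l (u m) b"
    proof (cases "\<exists>m\<in>V'. E l m")
      case True
      then obtain m where m: "m \<in> V'" "E l m" by blast
      then obtain b where "P b" "C m l (u m) b"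
        using less.prems(3)[of m l "u m"] u(1) sym l by (auto simp: V'_def)
      moreover have "m' = m" if "m' \<in> V'" "E l m'" for m'
        using leaf m that by (auto simp: V'_def)
      ultimately show thesis using that by blast
    qed (use start that in blast)
    have "C i j ((u(l := b)) i) ((u(l := b)) j)" if "i \<in> V" "j \<in> V" "E i j" for i j
      using that u(2) b(2) C_sym sym no_loop by (cases "i = l"; cases "j = l") (auto simp: V'_def)
    moreover have "\<forall>i\<in>V. P ((u(l := b)) i)"
      using u(1) b(1) by (simp add: V'_def)
    ultimately show ?thesis by blast
  qed simp
qed

definition diag_plus :: "(nat \<Rightarrow> real) \<Rightarrow> (nat \<Rightarrow> nat \<Rightarrow> quat) \<Rightarrow> nat \<Rightarrow> nat \<Rightarrow> quat" where
  "diag_plus dg N i j = (if i = j then qreal (dg i) else 0) + N i j"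

definition diag_sum :: "nat \<Rightarrow> (nat \<Rightarrow> real) \<Rightarrow> (nat \<Rightarrow> real) \<Rightarrow> real" where
  "diag_sum n dg \<beta> = (\<Sum>i<n. dg i * (\<beta> i)\<^sup>2)"

definition offdiag_sum :: "nat \<Rightarrow> (nat \<Rightarrow> nat \<Rightarrow> quat) \<Rightarrow> (nat \<Rightarrow> real) \<Rightarrow> real" where
  "offdiag_sum n N \<beta> = (\<Sum>i<n. \<Sum>j\<in>{..<n}-{i}. \<beta> i * \<beta> j * qnorm (N i j))"

lemma offdiag_sum_eq_full_sum:
  assumes "\<forall>i<n. N i i = 0"
  shows "offdiag_sum n N \<beta> = (\<Sum>i<n. \<Sum>j<n. \<beta> i * \<beta> j * qnorm (N i j))"
  unfolding offdiag_sum_def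
proof (rule sum.cong[OF refl])
  fix i assume "i \<in> {..<n}"
  then show "(\<Sum>j\<in>{..<n}-{i}. \<beta> i * \<beta> j * qnorm (N i j)) = (\<Sum>j<n. \<beta> i * \<beta> j * qnorm (N i j))"
    using assms sum.remove[of "{..<n}" i "\<lambda>j. \<beta> i * \<beta> j * qnorm (N i j)"] by simp
qed

lemma quadratic_form_diag_plus:
  "(\<Sum>i<n. \<Sum>j<n. qcnj (x i) * diag_plus dg N i j * x j)
     = qreal (diag_sum n dg (\<lambda>i. qnorm (x i))) + (\<Sum>i<n. \<Sum>j<n. qcnj (x i) * N i j * x j)"
proof -
  have "(\<Sum>j<n. qcnj (x i) * (if i = j then qreal (dg i) else 0) * x j)
      = qreal (dg i * (qnorm (x i))\<^sup>2)" if "i < n" for i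
  proof -
    have "(\<Sum>j<n. qcnj (x i) * (if i = j then qreal (dg i) else 0) * x j)
        = (\<Sum>j<n. if j = i then qcnj (x i) * qreal (dg i) * x i else 0)"
      by (rule sum.cong) auto
    also have "\<dots> = qreal (dg i) * (qcnj (x i) * x i)"
      using that by (simp add: mult.assoc qreal_commute)
    finally show ?thesis
      by (simp add: qcnj_mult_self qreal_mult)
  qed
  then show ?thesis
    by (simp add: diag_plus_def diag_sum_def distrib_left distrib_right sum.distrib qreal_sum)
qed

definition phases_aligned :: "nat \<Rightarrow> (nat \<Rightarrow> nat \<Rightarrow> quat) \<Rightarrow> quat \<Rightarrow> (nat \<Rightarrow> quat) \<Rightarrow> bool" where
  "phases_aligned n N \<omega> u \<longleftrightarrow> (\<forall>i<n. qnorm (u i) = 1) \<and>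
     (\<forall>i<n. \<forall>j<n. qcnj (u i) * N i j * u j = qreal (qnorm (N i j)) * \<omega>)"

lemma exists_aligned_phases:
  assumes one_sided: "\<And>i j. i < n \<Longrightarrow> j < n \<Longrightarrow> N i j = 0 \<or> N j i = 0"
    and acyclic: "acyclic_graph_on {..<n} (mat_adj N)"
    and \<omega>: "qnorm \<omega> = 1"
  shows "\<exists>u. phases_aligned n N \<omega> u"
proof -
  define aligned where "aligned i j a b \<longleftrightarrow>
      qcnj a * N i j * b = qreal (qnorm (N i j)) * \<omega> \<and> qcnj b * N j i * a = qreal (qnorm (N j i)) * \<omega>"
    for i j a b
  have extend: "\<exists>b. qnorm b = 1 \<and> aligned i j a b"
    if "i < n" "j < n" "qnorm a = 1" for i j a
    using one_sided[OF that(1,2)]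
  proof
    assume "N j i = 0"
    then show ?thesis
      using exists_unit_right_phase[OF that(3) \<omega>, of "N i j"] by (simp add: aligned_def)
  next
    assume "N i j = 0"
    then show ?thesis
      using exists_unit_left_phase[OF that(3) \<omega>, of "N j i"] by (simp add: aligned_def)
  qed
  have "\<exists>u. (\<forall>i\<in>{..<n}. qnorm (u i) = 1) \<and>
      (\<forall>i\<in>{..<n}. \<forall>j\<in>{..<n}. mat_adj N i j \<longrightarrow> aligned i j (u i) (u j))"
  proof (rule acyclic_graph_labelling[OF finite_lessThan acyclic])
    show "mat_adj N j i" if "mat_adj N i j" for i j
      using that by (auto simp: mat_adj_def)
    show "qnorm 1 = 1"
      by (simp add: qnorm_def)
    show "\<exists>b. qnorm b = 1 \<and> aligned i j a b" if "i \<in> {..<n}" "j \<in> {..<n}" "qnorm a = 1" for i j a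
      using extend that by simp
    show "aligned j i b a" if "aligned i j a b" for i j a b
      using that by (simp add: aligned_def)
  qed
  then obtain u where u: "\<forall>i<n. qnorm (u i) = 1"
    and edges: "\<forall>i<n. \<forall>j<n. mat_adj N i j \<longrightarrow> aligned i j (u i) (u j)"
    by auto
  have "qcnj (u i) * N i j * u j = qreal (qnorm (N i j)) * \<omega>" if "i < n" "j < n" for i j
    using edges that by (cases "N i j = 0") (auto simp: aligned_def mat_adj_def)
  then show ?thesis
    using u unfolding phases_aligned_def by blast
qed

lemma aligned_point_in_num_range:
  assumes u: "phases_aligned n N \<omega> u" and no_diag: "\<forall>i<n. N i i = 0"
    and \<beta>: "(\<Sum>i<n. (\<beta> i)\<^sup>2) = 1"
  shows "qreal (diag_sum n dg \<beta>) + qreal (offdiag_sum n N \<beta>) * \<omega> \<in> num_range n (diag_plus dg N)"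
proof -
  define x where "x i = qreal (\<beta> i) * u i" for i
  have norm_x: "(qnorm (x i))\<^sup>2 = (\<beta> i)\<^sup>2" if "i < n" for i
    using u that by (simp add: x_def phases_aligned_def qnorm_mult qnorm_qreal)
  have "(\<Sum>i<n. qcnj (x i) * x i) = qreal (\<Sum>i<n. (\<beta> i)\<^sup>2)"
    by (simp add: qcnj_mult_self norm_x qreal_sum)
  then have unit: "(\<Sum>i<n. qcnj (x i) * x i) = 1"
    using \<beta> by simp
  have "qcnj (x i) * N i j * x j = qreal (\<beta> i * \<beta> j * qnorm (N i j)) * \<omega>"
    if "i < n" "j < n" for i j
  proof -
    have "qcnj (x i) * N i j * x j = qreal (\<beta> i * \<beta> j) * (qcnj (u i) * N i j * u j)"
      by (simp add: x_def quat_eq_iff algebra_simps)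
    also have "\<dots> = qreal (\<beta> i * \<beta> j) * (qreal (qnorm (N i j)) * \<omega>)"
      using u that by (simp add: phases_aligned_def)
    finally show ?thesis
      by (simp add: qreal_mult mult.assoc[symmetric])
  qed
  then have "(\<Sum>i<n. \<Sum>j<n. qcnj (x i) * N i j * x j) = qreal (offdiag_sum n N \<beta>) * \<omega>"
    by (simp add: offdiag_sum_eq_full_sum[of n N, OF no_diag] qreal_sum sum_distrib_right)
  moreover have "diag_sum n dg (\<lambda>i. qnorm (x i)) = diag_sum n dg \<beta>"
    by (simp add: diag_sum_def norm_x)
  ultimately have "(\<Sum>i<n. \<Sum>j<n. qcnj (x i) * diag_plus dg N i j * x j)
      = qreal (diag_sum n dg \<beta>) + qreal (offdiag_sum n N \<beta>) * \<omega>"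
    by (simp add: quadratic_form_diag_plus)
  then show ?thesis
    using unit unfolding num_range_def by (intro CollectI exI[of _ x]) simp
qed

definition admissible_weights :: "nat \<Rightarrow> (nat \<Rightarrow> real) \<Rightarrow> real \<Rightarrow> (nat \<Rightarrow> real) set" where
  "admissible_weights n dg d = {\<beta>. (\<forall>i<n. 0 \<le> \<beta> i) \<and> (\<forall>i\<ge>n. \<beta> i = 0) \<and>
     (\<Sum>i<n. (\<beta> i)\<^sup>2) = 1 \<and> diag_sum n dg \<beta> = d}"

lemma unit_weight_le_1:
  fixes \<beta> :: "nat \<Rightarrow> real"
  assumes "(\<Sum>i<n. (\<beta> i)\<^sup>2) = 1" "0 \<le> \<beta> i" "i < n"
  shows "\<beta> i \<le> 1"
proof -
  have "(\<beta> i)\<^sup>2 \<le> 1\<^sup>2"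
    using assms member_le_sum[of i "{..<n}" "\<lambda>i. (\<beta> i)\<^sup>2"] by simp
  then show ?thesis
    by (rule power2_le_imp_le) simp
qed

lemma compact_admissible_weights: "compact (admissible_weights n dg d)"
proof -
  define B where "B i = (if i < n then {0..1::real} else {0})" for i
  have "admissible_weights n dg d =
      Pi UNIV B \<inter> {\<beta>. (\<Sum>i<n. (\<beta> i)\<^sup>2) = 1} \<inter> {\<beta>. diag_sum n dg \<beta> = d}"
    by (auto simp: admissible_weights_def B_def unit_weight_le_1 split: if_splits)
  moreover have "compact (Pi UNIV B)"
    using compactin_PiE[of "\<lambda>i. euclidean" UNIV B]
    by (simp add: B_def euclidean_product_topology PiE_UNIV_domain)
  moreover have "closed {\<beta>::nat \<Rightarrow> real. (\<Sum>i<n. (\<beta> i)\<^sup>2) = 1}"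
    by (intro closed_Collect_eq continuous_intros continuous_on_product_coordinates)
  moreover have "closed {\<beta>. diag_sum n dg \<beta> = d}"
    unfolding diag_sum_def by (intro closed_Collect_eq continuous_intros continuous_on_product_coordinates)
  ultimately show ?thesis
    by (simp add: compact_Int_closed closed_Int)
qed

lemma continuous_offdiag_sum: "continuous_on A (offdiag_sum n N)"
  unfolding offdiag_sum_def
  by (intro continuous_intros continuous_on_subset[OF continuous_on_product_coordinates]) simp_all

text \<open>Weights outside \<open>{..<n}\<close> are irrelevant in the definition of \<open>rfun\<close>, so the supremum
  may be taken over the compact set of admissible weights.\<close>

lemma rfun_eq_Sup: "rfun n dg N d = Sup (offdiag_sum n N ` admissible_weights n dg d)"
proof -
  define trunc where "trunc \<beta> i = (if i < n then \<beta> i else (0::real))" for \<beta> i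
  have trunc: "offdiag_sum n N (trunc \<beta>) = offdiag_sum n N \<beta>"
    "diag_sum n dg (trunc \<beta>) = diag_sum n dg \<beta>"
    "(\<Sum>i<n. (trunc \<beta> i)\<^sup>2) = (\<Sum>i<n. (\<beta> i)\<^sup>2)" for \<beta>
    by (simp_all add: trunc_def offdiag_sum_def diag_sum_def)
  have "{offdiag_sum n N \<beta> | \<beta>. (\<Sum>i<n. (\<beta> i)\<^sup>2) = 1 \<and> (\<forall>i<n. 0 \<le> \<beta> i) \<and> diag_sum n dg \<beta> = d}
      = offdiag_sum n N ` admissible_weights n dg d" (is "?L = ?R")
  proof
    show "?L \<subseteq> ?R"
    proof
      fix y assume "y \<in> ?L"
      then obtain \<beta> where \<beta>: "y = offdiag_sum n N \<beta>" "(\<Sum>i<n. (\<beta> i)\<^sup>2) = 1"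
        "\<forall>i<n. 0 \<le> \<beta> i" "diag_sum n dg \<beta> = d"
        by blast
      then have "trunc \<beta> \<in> admissible_weights n dg d"
        by (simp add: admissible_weights_def trunc trunc_def)
      then show "y \<in> ?R"
        using \<beta>(1) trunc(1) by (metis image_eqI)
    qed
    show "?R \<subseteq> ?L"
      unfolding admissible_weights_def by blast
  qed
  then show ?thesis
    by (simp add: rfun_def offdiag_sum_def diag_sum_def)
qed

lemma offdiag_sum_le_rfun:
  assumes "\<beta> \<in> admissible_weights n dg d"
  shows "offdiag_sum n N \<beta> \<le> rfun n dg N d"
  unfolding rfun_eq_Sup
  using assms compact_continuous_image[OF continuous_offdiag_sum compact_admissible_weights]
  by (intro cSup_upper imageI bounded_imp_bdd_above compact_imp_bounded)

lemma rfun_attained: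
  assumes "admissible_weights n dg d \<noteq> {}"
  shows "\<exists>\<beta>\<in>admissible_weights n dg d. offdiag_sum n N \<beta> = rfun n dg N d"
proof -
  obtain \<beta> where "\<beta> \<in> admissible_weights n dg d"
    and max: "\<forall>\<gamma>\<in>admissible_weights n dg d. offdiag_sum n N \<gamma> \<le> offdiag_sum n N \<beta>"
    using continuous_attains_sup[OF compact_admissible_weights assms continuous_offdiag_sum] by blast
  moreover from this have "rfun n dg N d = offdiag_sum n N \<beta>"
    unfolding rfun_eq_Sup by (intro cSup_eq_maximum) auto
  ultimately show ?thesis by auto
qed

lemma diag_sum_between_Min_Max:
  assumes "(\<Sum>i<n. (\<beta> i)\<^sup>2) = 1"
  shows "diag_sum n dg \<beta> \<in> {Min (dg ` {..<n}) .. Max (dg ` {..<n})}"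
proof -
  have "(\<Sum>i<n. Min (dg ` {..<n}) * (\<beta> i)\<^sup>2) \<le> diag_sum n dg \<beta>"
    "diag_sum n dg \<beta> \<le> (\<Sum>i<n. Max (dg ` {..<n}) * (\<beta> i)\<^sup>2)"
    unfolding diag_sum_def by (auto intro!: sum_mono mult_right_mono)
  then show ?thesis
    using assms by (simp add: sum_distrib_left[symmetric])
qed

text \<open>The witness puts weights \<open>\<surd>t\<close> and \<open>\<surd>(1 - t)\<close> on indices of a minimal and a maximal
  diagonal entry; choosing t = 1 when these entries coincide also covers the case a = b.\<close>

lemma admissible_weights_nonempty:
  assumes "n \<ge> 1" and d: "d \<in> {Min (dg ` {..<n}) .. Max (dg ` {..<n})}"
  shows "admissible_weights n dg d \<noteq> {}"
proof -
  have ne: "dg ` {..<n} \<noteq> {}" using assms(1) by (auto simp: lessThan_empty_iff)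
  obtain a where a: "a < n" "dg a = Min (dg ` {..<n})"
    using Min_in[OF _ ne] by auto
  obtain b where b: "b < n" "dg b = Max (dg ` {..<n})"
    using Max_in[OF _ ne] by auto
  define t where "t = (if dg a = dg b then 1 else (dg b - d) / (dg b - dg a))"
  have le: "dg a \<le> d" "d \<le> dg b"
    using d a(2) b(2) by simp_all
  have t: "0 \<le> t \<and> t \<le> 1 \<and> t * dg a + (1 - t) * dg b = d"
  proof (cases "dg a = dg b")
    case False
    then have "dg a < dg b" using le by simp
    then have "0 \<le> t" "t \<le> 1" "t * (dg b - dg a) = dg b - d"
      using le by (simp_all add: t_def False divide_simps)
    moreover from this(3) have "t * dg a + (1 - t) * dg b = d"
      by (simp add: algebra_simps)
    ultimately show ?thesis by simp
  qed (use le in \<open>simp add: t_def\<close>)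
  define \<beta> where "\<beta> i = (if i = a then sqrt t else if i = b then sqrt (1 - t) else 0)" for i
  have "a = b \<Longrightarrow> t = 1"
    by (simp add: t_def)
  then have sq: "(\<beta> i)\<^sup>2 = (if i = a then t else 0) + (if i = b then 1 - t else 0)" for i
    using t a(1) b(1) by (auto simp: \<beta>_def)
  have "dg i * (\<beta> i)\<^sup>2 = (if i = a then t * dg a else 0) + (if i = b then (1 - t) * dg b else 0)"
    for i
    by (simp add: sq distrib_left)
  then have "diag_sum n dg \<beta> = d"
    using a(1) b(1) t by (simp add: diag_sum_def sum.distrib)
  moreover have "(\<Sum>i<n. (\<beta> i)\<^sup>2) = 1"
    using a(1) b(1) by (simp add: sq sum.distrib)
  moreover have "\<forall>i<n. 0 \<le> \<beta> i" "\<forall>i\<ge>n. \<beta> i = 0"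
    using t a(1) b(1) by (auto simp: \<beta>_def)
  ultimately show ?thesis
    unfolding admissible_weights_def by blast
qed

lemma qnorm_diff_qreal: "qnorm (p - qreal x) = sqrt ((qRe p - x)\<^sup>2 + (qI p)\<^sup>2 + (qJ p)\<^sup>2 + (qK p)\<^sup>2)"
  by (simp add: qnorm_def)

text \<open>Along the renormalised segment from \<open>\<beta>\<close> to the first unit vector, the distance of p to the
  diagonal value minus the off-diagonal sum changes sign, since the latter vanishes at a unit
  vector.\<close>

lemma exists_weights_on_disk_boundary:
  assumes "n \<ge> 1" and unit: "(\<Sum>i<n. (\<beta> i)\<^sup>2) = 1" and nonneg: "\<forall>i<n. 0 \<le> \<beta> i"
    and inside: "qnorm (p - qreal (diag_sum n dg \<beta>)) \<le> offdiag_sum n N \<beta>"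
  shows "\<exists>\<beta>'. (\<Sum>i<n. (\<beta>' i)\<^sup>2) = 1 \<and> qnorm (p - qreal (diag_sum n dg \<beta>')) = offdiag_sum n N \<beta>'"
proof -
  define e where "e i = (if i = 0 then 1 else 0 :: real)" for i :: nat
  define \<gamma> where "\<gamma> t i = (1 - t) * \<beta> i + t * e i" for t i
  define S where "S t = (\<Sum>i<n. (\<gamma> t i)\<^sup>2)" for t
  define \<nu> where "\<nu> t i = \<gamma> t i / sqrt (S t)" for t i
  define G where "G t = qnorm (p - qreal (diag_sum n dg (\<nu> t))) - offdiag_sum n N (\<nu> t)" for t
  have S_pos: "0 < S t" if "0 \<le> t" "t \<le> 1" for t
  proof (cases "t = 0")
    case True
    then show ?thesis using unit by (simp add: S_def \<gamma>_def)
  next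
    case False
    have "t \<le> \<gamma> t 0"
      using that nonneg assms(1) by (simp add: \<gamma>_def e_def)
    then have "t\<^sup>2 \<le> (\<gamma> t 0)\<^sup>2"
      using that(1) by (rule power_mono)
    also have "\<dots> \<le> S t"
      using assms(1) member_le_sum[of 0 "{..<n}" "\<lambda>i. (\<gamma> t i)\<^sup>2"] by (simp add: S_def)
    moreover have "0 < t\<^sup>2"
      using False by simp
    ultimately show ?thesis by linarith
  qed
  have \<nu>_unit: "(\<Sum>i<n. (\<nu> t i)\<^sup>2) = 1" if "0 \<le> t" "t \<le> 1" for t
    using S_pos[OF that] by (simp add: \<nu>_def power_divide sum_divide_distrib[symmetric] S_def)
  have "continuous_on {0..1} S"
    unfolding S_def \<gamma>_def by (intro continuous_intros)
  then have "continuous_on {0..1} (\<lambda>t. \<nu> t i)" for i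
    unfolding \<nu>_def \<gamma>_def using S_pos by (intro continuous_intros) force+
  then have cont: "continuous_on {0..1} G"
    unfolding G_def qnorm_diff_qreal diag_sum_def offdiag_sum_def by (intro continuous_intros)
  have "\<nu> 0 = \<beta>"
    using unit by (simp add: fun_eq_iff \<nu>_def \<gamma>_def S_def)
  then have G0: "G 0 \<le> 0"
    using inside by (simp add: G_def)
  have "(\<gamma> 1 i)\<^sup>2 = e i" for i
    by (simp add: \<gamma>_def e_def)
  then have "S 1 = 1"
    using assms(1) by (simp add: S_def e_def)
  then have "\<nu> 1 = e"
    by (simp add: fun_eq_iff \<nu>_def \<gamma>_def)
  moreover have "offdiag_sum n N e = 0"
    unfolding offdiag_sum_def by (intro sum.neutral ballI) (auto simp: e_def)
  ultimately have G1: "0 \<le> G 1"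
    by (simp add: G_def qnorm_nonneg)
  obtain t where "0 \<le> t" "t \<le> 1" "G t = 0"
    using IVT'[of G 0 0 1, OF G0 G1 _ cont] by auto
  then show ?thesis
    using \<nu>_unit by (intro exI[of _ "\<nu> t"]) (simp add: G_def)
qed

lemma num_range_subset_disks:
  assumes no_diag: "\<forall>i<n. N i i = 0"
  shows "num_range n (diag_plus dg N)
    \<subseteq> (\<Union>d\<in>{Min (dg ` {..<n}) .. Max (dg ` {..<n})}. qdisk (qreal d) (rfun n dg N d))"
proof
  fix p assume "p \<in> num_range n (diag_plus dg N)"
  then obtain x where p: "p = (\<Sum>i<n. \<Sum>j<n. qcnj (x i) * diag_plus dg N i j * x j)"
    and x: "(\<Sum>i<n. qcnj (x i) * x i) = 1"
    by (auto simp: num_range_def)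
  define \<beta> where "\<beta> i = (if i < n then qnorm (x i) else 0)" for i
  define d where "d = diag_sum n dg \<beta>"
  have "qreal (\<Sum>i<n. (\<beta> i)\<^sup>2) = 1"
    using x by (simp add: \<beta>_def qcnj_mult_self qreal_sum)
  then have unit: "(\<Sum>i<n. (\<beta> i)\<^sup>2) = 1"
    by (simp add: quat_eq_iff)
  then have "\<beta> \<in> admissible_weights n dg d"
    by (simp add: admissible_weights_def d_def \<beta>_def qnorm_nonneg)
  have "qnorm (\<Sum>i<n. \<Sum>j<n. qcnj (x i) * N i j * x j)
      \<le> (\<Sum>i<n. \<Sum>j<n. qnorm (qcnj (x i) * N i j * x j))"
    by (rule order_trans[OF qnorm_sum sum_mono[OF qnorm_sum]])
  also have "\<dots> = offdiag_sum n N \<beta>"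
    by (simp add: offdiag_sum_eq_full_sum[of n N, OF no_diag] \<beta>_def qnorm_mult qnorm_cnj mult_ac)
  also have "\<dots> \<le> rfun n dg N d"
    by (rule offdiag_sum_le_rfun) fact
  finally have "p \<in> qdisk (qreal d) (rfun n dg N d)"
    by (simp add: qdisk_def p quadratic_form_diag_plus d_def diag_sum_def \<beta>_def)
  then show "p \<in> (\<Union>d\<in>{Min (dg ` {..<n}) .. Max (dg ` {..<n})}. qdisk (qreal d) (rfun n dg N d))"
    using diag_sum_between_Min_Max[OF unit] by (auto simp: d_def)
qed

lemma disks_subset_num_range:
  assumes "n \<ge> 1"
    and one_sided: "\<And>i j. i < n \<Longrightarrow> j < n \<Longrightarrow> N i j = 0 \<or> N j i = 0"
    and acyclic: "acyclic_graph_on {..<n} (mat_adj N)"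
  shows "(\<Union>d\<in>{Min (dg ` {..<n}) .. Max (dg ` {..<n})}. qdisk (qreal d) (rfun n dg N d))
    \<subseteq> num_range n (diag_plus dg N)"
proof
  fix p assume "p \<in> (\<Union>d\<in>{Min (dg ` {..<n}) .. Max (dg ` {..<n})}. qdisk (qreal d) (rfun n dg N d))"
  then obtain d where d: "d \<in> {Min (dg ` {..<n}) .. Max (dg ` {..<n})}"
    and p: "qnorm (p - qreal d) \<le> rfun n dg N d"
    unfolding qdisk_def by blast
  from rfun_attained[OF admissible_weights_nonempty[OF assms(1) d]]
  obtain \<beta> where "\<beta> \<in> admissible_weights n dg d" and max: "offdiag_sum n N \<beta> = rfun n dg N d" ..
  then have \<beta>: "(\<Sum>i<n. (\<beta> i)\<^sup>2) = 1" "\<forall>i<n. 0 \<le> \<beta> i"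
    "qnorm (p - qreal (diag_sum n dg \<beta>)) \<le> offdiag_sum n N \<beta>"
    using p max by (simp_all add: admissible_weights_def)
  obtain \<beta>' where unit: "(\<Sum>i<n. (\<beta>' i)\<^sup>2) = 1"
    and on_sphere: "qnorm (p - qreal (diag_sum n dg \<beta>')) = offdiag_sum n N \<beta>'"
    using exists_weights_on_disk_boundary[OF assms(1) \<beta>] by blast
  obtain \<omega> where \<omega>: "qnorm \<omega> = 1"
    and polar: "p - qreal (diag_sum n dg \<beta>') = qreal (offdiag_sum n N \<beta>') * \<omega>"
    using quat_polar[of "p - qreal (diag_sum n dg \<beta>')"] unfolding on_sphere by blast
  obtain u where "phases_aligned n N \<omega> u"
    using exists_aligned_phases[OF one_sided acyclic \<omega>] by blast
  moreover have "\<forall>i<n. N i i = 0"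
    using one_sided by blast
  ultimately have "qreal (diag_sum n dg \<beta>') + qreal (offdiag_sum n N \<beta>') * \<omega> \<in> num_range n (diag_plus dg N)"
    using unit by (rule aligned_point_in_num_range)
  then show "p \<in> num_range n (diag_plus dg N)"
    by (simp add: polar[symmetric])
qed

theorem theorem4p2:
  fixes n :: nat and dg :: "nat \<Rightarrow> real" and N :: "nat \<Rightarrow> nat \<Rightarrow> quat"
  assumes "n \<ge> 1"
    and "\<forall>i<n. \<forall>j<n. j \<le> i \<longrightarrow> N i j = 0"
    and "mat_is_tree n N"
  shows "num_range n (\<lambda>i j. (if i = j then qreal (dg i) else 0) + N i j) =
    (\<Union>d\<in>{Min (dg ` {..<n}) .. Max (dg ` {..<n})}. qdisk (qreal d) (rfun n dg N d))"
proof -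
  have "(\<lambda>i j. (if i = j then qreal (dg i) else 0) + N i j) = diag_plus dg N"
    by (simp add: fun_eq_iff diag_plus_def)
  moreover have "\<forall>i<n. N i i = 0"
    using assms(2) by blast
  moreover have "N i j = 0 \<or> N j i = 0" if "i < n" "j < n" for i j
    using assms(2) that nat_le_linear by blast
  ultimately show ?thesis
    using num_range_subset_disks disks_subset_num_range[OF assms(1) _ mat_is_tree_acyclic[OF assms(3)]]
    by (simp add: subset_antisym)
qed

end
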